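(* Let $\mathrm{X}$ be a reflexive Banach space, let $\ell$ be a Schauder sequence space such that $\ell^*$ is also a Schauder sequence space, and let $F=\{f_i\}\subset\mathrm{X}$, $G=\{g_i\}\subset\mathrm{X}^*$. Then $(G,F)$ is an $(\ell,\ell^* )$-atomic decomposition for $\mathrm{X}$ if and only if $(F,G)$ is an $(\ell^*,\ell)$-atomic decomposition for $\mathrm{X}^*$.
   Context: $\mathrm{X}^{**}$ is identified with $\mathrm{X}$ and $\langle f,g\rangle:=g(f)$. A BK-space is a Banach space of scalar sequences indexed by $\mathbb{N}$ with continuous coordinate functionals; a Schauder sequence space is a BK-space in which the canonical vectors $\delta_i$ form a Schauder basis, and then $\ell^*$ is identified isometrically with the sequence space $\{\{\phi(\delta_i)\}:\phi\in\ell^*\}$, acting by $\phi(\{c_i\})=\sum_i\phi(\delta_i)c_i$ (and $\ell\subset\ell^{**}$ in the same way). $(G,F)$ is an $(\ell,\ell^* )$-atomic decomposition for $\mathrm{X}$ if there are $A,B>0$ such that for all $f\in\mathrm{X}$: $\{\langle f,g_i\rangle\}\in\ell$, $A\|f\|\le\|\{\langle f,g_i\rangle\}\|_\ell\le B\|f\|$, and $f=\sum_i\langle f,g_i\rangle f_i$; and moreover $F$ is an $\ell^*$-Bessel for $\mathrm{X}^*$, i.e. there is $B'>0$ with $\{\langle f_i,g\rangle\}\in\ell^*$ and $\|\{\langle f_i,g\rangle\}\|_{\ell^*}\le B'\|g\|$ for all $g\in\mathrm{X}^*$. $(F,G)$ is an $(\ell^*,\ell)$-atomic decomposition for $\mathrm{X}^*$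 if there are $A,B>0$ such that for all $g\in\mathrm{X}^*$: $\{\langle f_i,g\rangle\}\in\ell^*$, $A\|g\|\le\|\{\langle f_i,g\rangle\}\|_{\ell^*}\le B\|g\|$, and $g=\sum_i\langle f_i,g\rangle g_i$; and moreover $G$ is an $\ell$-Bessel for $\mathrm{X}$, i.e. there is $B'>0$ with $\{\langle f,g_i\rangle\}\in\ell$ and $\|\{\langle f,g_i\rangle\}\|_\ell\le B'\|f\|$ for all $f\in\mathrm{X}$. *)

theory Defs
  imports "HOL-Analysis.Analysis"
begin

(* Scalars are real. Sequences are functions nat => real. A sequence space is
   given as a carrier set L together with a norm function N on it. *)

definition canon_vec :: "nat \<Rightarrow> nat \<Rightarrow> real" ("\<delta>") where
  "\<delta> i = (\<lambda>j. if j = i then 1 else 0)"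

definition BK_space :: "(nat \<Rightarrow> real) set \<Rightarrow> ((nat \<Rightarrow> real) \<Rightarrow> real) \<Rightarrow> bool" where
  "BK_space L N \<longleftrightarrow>
     (\<lambda>_. 0) \<in> L \<and>
     (\<forall>c\<in>L. \<forall>d\<in>L. (\<lambda>i. c i + d i) \<in> L) \<and>
     (\<forall>c\<in>L. \<forall>a. (\<lambda>i. a * c i) \<in> L) \<and>
     (\<forall>c\<in>L. N c \<ge> 0 \<and> (N c = 0 \<longleftrightarrow> c = (\<lambda>_. 0))) \<and>
     (\<forall>c\<in>L. \<forall>a. N (\<lambda>i. a * c i) = \<bar>a\<bar> * N c) \<and>
     (\<forall>c\<in>L. \<forall>d\<in>L. N (\<lambda>i. c i + d i) \<le> N c + N d) \<and>
     \<comment> \<open>completeness: every Cauchy sequence converges in L\<close>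
     (\<forall>s. (\<forall>n. s n \<in> L) \<longrightarrow>
          (\<forall>e>0. \<exists>M. \<forall>m\<ge>M. \<forall>n\<ge>M. N (\<lambda>i. s m i - s n i) < e) \<longrightarrow>
          (\<exists>c\<in>L. (\<lambda>n. N (\<lambda>i. s n i - c i)) \<longlonglongrightarrow> 0)) \<and>
     \<comment> \<open>continuous coordinate functionals\<close>
     (\<forall>i. \<exists>K. \<forall>c\<in>L. \<bar>c i\<bar> \<le> K * N c)"

(* Schauder sequence space: BK-space in which the canonical vectors form a
   Schauder basis, i.e. every c in L is the N-limit of its truncations
   sum_{i<n} c_i delta_i (coefficients are unique by continuity of coordinates). *)
definition Schauder_seq_space :: "(nat \<Rightarrow> real) set \<Rightarrow> ((nat \<Rightarrow> real) \<Rightarrow> real) \<Rightarrow> bool" where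
  "Schauder_seq_space L N \<longleftrightarrow>
     BK_space L N \<and> (\<forall>i. \<delta> i \<in> L) \<and>
     (\<forall>c\<in>L. (\<lambda>n. N (\<lambda>j. c j - (\<Sum>i<n. c i * \<delta> i j))) \<longlonglongrightarrow> 0)"

(* The dual ell^* of a Schauder sequence space, identified with the sequences
   {phi(delta_i)} for bounded linear functionals phi on (L,N). *)
definition dual_seq :: "(nat \<Rightarrow> real) set \<Rightarrow> ((nat \<Rightarrow> real) \<Rightarrow> real) \<Rightarrow> (nat \<Rightarrow> real) set" where
  "dual_seq L N = {d. \<exists>\<phi>.
       (\<forall>c\<in>L. \<forall>c'\<in>L. \<phi> (\<lambda>i. c i + c' i) = \<phi> c + \<phi> c') \<and>
       (\<forall>c\<in>L. \<forall>a. \<phi> (\<lambda>i. a * c i) = a * \<phi> c) \<and>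
       (\<exists>K. \<forall>c\<in>L. \<bar>\<phi> c\<bar> \<le> K * N c) \<and>
       (\<forall>i. \<phi> (\<delta> i) = d i)}"

definition dual_norm :: "(nat \<Rightarrow> real) set \<Rightarrow> ((nat \<Rightarrow> real) \<Rightarrow> real) \<Rightarrow> (nat \<Rightarrow> real) \<Rightarrow> real" where
  "dual_norm L N d = (SUP c\<in>{c\<in>L. N c \<le> 1}. \<bar>\<Sum>i. d i * c i\<bar>)"

definition canon_embed :: "'a::real_normed_vector \<Rightarrow> (('a \<Rightarrow>\<^sub>L real) \<Rightarrow>\<^sub>L real)" where
  "canon_embed x = Blinfun (\<lambda>g. blinfun_apply g x)"

definition reflexive_space :: "'a::real_normed_vector itself \<Rightarrow> bool" where
  "reflexive_space _ \<longleftrightarrow> surj (canon_embed :: 'a \<Rightarrow> _)"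

(* (G,F) is an (ell, ell^star)-atomic decomposition for X. Pairing <f,g> = g f. *)
definition atomic_decomp_X ::
  "(nat \<Rightarrow> real) set \<Rightarrow> ((nat \<Rightarrow> real) \<Rightarrow> real) \<Rightarrow>
   (nat \<Rightarrow> real) set \<Rightarrow> ((nat \<Rightarrow> real) \<Rightarrow> real) \<Rightarrow>
   (nat \<Rightarrow> ('a::real_normed_vector \<Rightarrow>\<^sub>L real)) \<Rightarrow> (nat \<Rightarrow> 'a) \<Rightarrow> bool" where
  "atomic_decomp_X L N Ls Ns g f \<longleftrightarrow>
     (\<exists>A B. A > 0 \<and> B > 0 \<and>
        (\<forall>x. (\<lambda>i. blinfun_apply (g i) x) \<in> L \<and>
             A * norm x \<le> N (\<lambda>i. blinfun_apply (g i) x) \<and> N (\<lambda>i. blinfun_apply (g i) x) \<le> B * norm x \<and>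
             (\<lambda>i. blinfun_apply (g i) x *\<^sub>R f i) sums x)) \<and>
     (\<exists>B'. B' > 0 \<and>
        (\<forall>h::'a \<Rightarrow>\<^sub>L real. (\<lambda>i. blinfun_apply h (f i)) \<in> Ls \<and> Ns (\<lambda>i. blinfun_apply h (f i)) \<le> B' * norm h))"

(* (F,G) is an (ell^star, ell)-atomic decomposition for X* (X** identified with X). *)
definition atomic_decomp_dual ::
  "(nat \<Rightarrow> real) set \<Rightarrow> ((nat \<Rightarrow> real) \<Rightarrow> real) \<Rightarrow>
   (nat \<Rightarrow> real) set \<Rightarrow> ((nat \<Rightarrow> real) \<Rightarrow> real) \<Rightarrow>
   (nat \<Rightarrow> 'a::real_normed_vector) \<Rightarrow> (nat \<Rightarrow> ('a \<Rightarrow>\<^sub>L real)) \<Rightarrow> bool" where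
  "atomic_decomp_dual Ls Ns L N f g \<longleftrightarrow>
     (\<exists>A B. A > 0 \<and> B > 0 \<and>
        (\<forall>h::'a \<Rightarrow>\<^sub>L real. (\<lambda>i. blinfun_apply h (f i)) \<in> Ls \<and>
             A * norm h \<le> Ns (\<lambda>i. blinfun_apply h (f i)) \<and> Ns (\<lambda>i. blinfun_apply h (f i)) \<le> B * norm h \<and>
             (\<lambda>i. blinfun_apply h (f i) *\<^sub>R g i) sums h)) \<and>
     (\<exists>B'. B' > 0 \<and>
        (\<forall>x. (\<lambda>i. blinfun_apply (g i) x) \<in> L \<and> N (\<lambda>i. blinfun_apply (g i) x) \<le> B' * norm x))"

end

theory Submission
  imports Defs
begin

text \<open>
  Write \<open>e x = (g i x)\<^sub>i\<close> for the
  coefficients of \<open>x\<close> and \<open>d h = (h (f i))\<^sub>i\<close> for the coefficients of a functional \<open>h\<close>.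
  Under either decomposition one has the pairing identity \<open>h x = \<Sum>\<^sub>i d h i * e x i\<close>, and
  pairing an element of \<open>\<ell>\<^sup>*\<close> with an element of \<open>\<ell>\<close> is bounded by the product of the norms.
  Cutting off the first \<open>n\<close> coefficients of either factor therefore bounds the error of the
  \<open>n\<close>-th partial sum of the expansion by the norm of a tail of a coefficient sequence; since the
  canonical vectors are a Schauder basis of \<open>\<ell>\<close> and of \<open>\<ell>\<^sup>*\<close>, these tails tend to 0, which
  yields the reconstruction series, and the case \<open>n = 0\<close> yields the lower frame bound.
\<close>

subsection \<open>Norming functionals (Hahn-Banach)\<close>

definition dominated_graph :: "'a::real_normed_vector \<Rightarrow> ('a \<times> real) set \<Rightarrow> bool" where
  "dominated_graph x0 G \<longleftrightarrow> (x0, norm x0) \<in> G \<and>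
     (\<forall>x a b. (x,a) \<in> G \<longrightarrow> (x,b) \<in> G \<longrightarrow> a = b) \<and>
     (\<forall>x a y b. (x,a) \<in> G \<longrightarrow> (y,b) \<in> G \<longrightarrow> (x + y, a + b) \<in> G) \<and>
     (\<forall>x a r. (x,a) \<in> G \<longrightarrow> (r *\<^sub>R x, r * a) \<in> G) \<and>
     (\<forall>x a. (x,a) \<in> G \<longrightarrow> a \<le> norm x)"

lemma dominated_graph_chain_Union:
  assumes C: "C \<in> chains {G. dominated_graph x0 G}" and ne: "C \<noteq> {}"
  shows "dominated_graph x0 (\<Union>C)"
proof -
  have sub: "\<And>G. G \<in> C \<Longrightarrow> dominated_graph x0 G" using chainsD2[OF C] by auto
  have common: "\<exists>G\<in>C. p \<in> G \<and> q \<in> G" if "p \<in> \<Union>C" and "q \<in> \<Union>C" for p q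
    using that chainsD[OF C] by blast
  obtain G0 where "G0 \<in> C" using ne by auto
  show ?thesis unfolding dominated_graph_def
  proof (intro conjI allI impI)
    show "(x0, norm x0) \<in> \<Union>C" using sub[OF \<open>G0 \<in> C\<close>] \<open>G0 \<in> C\<close> unfolding dominated_graph_def by auto
  next
    fix x a b assume "(x,a) \<in> \<Union>C" "(x,b) \<in> \<Union>C"
    then obtain G where "G \<in> C" "(x,a) \<in> G" "(x,b) \<in> G" using common by blast
    then show "a = b" using sub[of G] unfolding dominated_graph_def by blast
  next
    fix x a y b assume "(x,a) \<in> \<Union>C" "(y,b) \<in> \<Union>C"
    then obtain G where "G \<in> C" "(x,a) \<in> G" "(y,b) \<in> G" using common by blast
    then show "(x + y, a + b) \<in> \<Union>C" using sub[of G] unfolding dominated_graph_def by blast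
  next
    fix x a r assume "(x,a) \<in> \<Union>C"
    then obtain G where "G \<in> C" "(x,a) \<in> G" by blast
    then show "(r *\<^sub>R x, r * a) \<in> \<Union>C" using sub[of G] unfolding dominated_graph_def by blast
  next
    fix x a assume "(x,a) \<in> \<Union>C"
    then obtain G where "G \<in> C" "(x,a) \<in> G" by blast
    then show "a \<le> norm x" using sub[of G] unfolding dominated_graph_def by blast
  qed
qed

lemma dominated_graph_line:
  fixes x0 :: "'a::real_normed_vector"
  assumes "x0 \<noteq> 0"
  shows "dominated_graph x0 {(t *\<^sub>R x0, t * norm x0) | t. True}"
  unfolding dominated_graph_def
proof (intro conjI allI impI)
  show "(x0, norm x0) \<in> {(t *\<^sub>R x0, t * norm x0) |t. True}"
    by (rule CollectI, rule exI[of _ 1]) simp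
next
  fix x a b assume "(x, a) \<in> {(t *\<^sub>R x0, t * norm x0) |t. True}"
    "(x, b) \<in> {(t *\<^sub>R x0, t * norm x0) |t. True}"
  then obtain s t where "x = s *\<^sub>R x0" "a = s * norm x0" "x = t *\<^sub>R x0" "b = t * norm x0" by blast
  then show "a = b" using assms by (metis scaleR_cancel_right)
next
  fix x a y b assume "(x, a) \<in> {(t *\<^sub>R x0, t * norm x0) |t. True}"
    "(y, b) \<in> {(t *\<^sub>R x0, t * norm x0) |t. True}"
  then obtain s t where "x = s *\<^sub>R x0" "a = s * norm x0" "y = t *\<^sub>R x0" "b = t * norm x0" by auto
  then show "(x + y, a + b) \<in> {(t *\<^sub>R x0, t * norm x0) |t. True}"
    by (intro CollectI exI[of _ "s + t"]) (simp add: scaleR_add_left distrib_right)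
next
  fix x a r assume "(x, a) \<in> {(t *\<^sub>R x0, t * norm x0) |t. True}"
  then obtain s where "x = s *\<^sub>R x0" "a = s * norm x0" by auto
  then show "(r *\<^sub>R x, r * a) \<in> {(t *\<^sub>R x0, t * norm x0) |t. True}"
    by (intro CollectI exI[of _ "r * s"]) simp
next
  fix x a assume "(x, a) \<in> {(t *\<^sub>R x0, t * norm x0) |t. True}"
  then obtain s where "x = s *\<^sub>R x0" "a = s * norm x0" by auto
  then show "a \<le> norm x" by (simp add: mult_right_mono del: mult_le_cancel_right)
qed

lemma dominated_graph_zero: "dominated_graph x0 G \<Longrightarrow> (0, 0) \<in> G"
  unfolding dominated_graph_def by (metis mult_zero_left scaleR_zero_left)

text \<open>The one-dimensional extension step: a value \<open>c\<close> for a new vector \<open>y\<close> that is compatible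
  with domination, obtained as the supremum of the admissible lower bounds.\<close>
lemma dominated_graph_extension_value:
  assumes G: "dominated_graph x0 G"
  obtains c where "\<And>u a. (u,a) \<in> G \<Longrightarrow> a - norm (u - y) \<le> c"
    and "\<And>v b. (v,b) \<in> G \<Longrightarrow> c \<le> norm (v + y) - b"
proof -
  have add: "\<And>x a z b. (x,a) \<in> G \<Longrightarrow> (z,b) \<in> G \<Longrightarrow> (x + z, a + b) \<in> G"
    and dom: "\<And>x a. (x,a) \<in> G \<Longrightarrow> a \<le> norm x"
    using G unfolding dominated_graph_def by blast+
  define S where "S = {a - norm (u - y) | u a. (u,a) \<in> G}"
  have S_ne: "S \<noteq> {}" using dominated_graph_zero[OF G] unfolding S_def by blast
  have S_le: "s \<le> norm (v + y) - b" if "s \<in> S" "(v,b) \<in> G" for s v b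
  proof -
    obtain u a where s: "s = a - norm (u - y)" "(u,a) \<in> G" using \<open>s \<in> S\<close> unfolding S_def by blast
    have "a + b \<le> norm (u + v)" using dom[OF add[OF s(2) that(2)]] .
    also have "u + v = (u - y) + (v + y)" by simp
    also have "norm \<dots> \<le> norm (u - y) + norm (v + y)" by (rule norm_triangle_ineq)
    finally show ?thesis using s by simp
  qed
  have "bdd_above S" using S_le dominated_graph_zero[OF G] unfolding bdd_above_def by blast
  show ?thesis
  proof (rule that[of "Sup S"])
    show "a - norm (u - y) \<le> Sup S" if "(u,a) \<in> G" for u a
      by (rule cSup_upper[OF _ \<open>bdd_above S\<close>]) (use that in \<open>auto simp: S_def\<close>)
    show "Sup S \<le> norm (v + y) - b" if "(v,b) \<in> G" for v b
      by (rule cSup_least[OF S_ne]) (use S_le that in auto)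
  qed
qed

text \<open>Domination of the extended functional \<open>x + t y \<mapsto> a + t c\<close>: for \<open>t \<noteq> 0\<close> rescale by
  \<open>1/|t|\<close> and use the matching inequality for \<open>c\<close>.\<close>
lemma dominated_extension_le_norm:
  assumes G: "dominated_graph x0 G" and x1: "(x1, a1) \<in> G"
    and c_lower: "\<And>u a. (u,a) \<in> G \<Longrightarrow> a - norm (u - y) \<le> c"
    and c_upper: "\<And>v b. (v,b) \<in> G \<Longrightarrow> c \<le> norm (v + y) - b"
  shows "a1 + t * c \<le> norm (x1 + t *\<^sub>R y)"
proof -
  have sc: "\<And>x a r. (x,a) \<in> G \<Longrightarrow> (r *\<^sub>R x, r * a) \<in> G"
    and dom: "\<And>x a. (x,a) \<in> G \<Longrightarrow> a \<le> norm x"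
    using G unfolding dominated_graph_def by blast+
  consider "t = 0" | "t > 0" | "t < 0" by linarith
  then show ?thesis
  proof cases
    case 1 then show ?thesis using dom[OF x1] by simp
  next
    case 2
    have "c \<le> norm (inverse t *\<^sub>R x1 + y) - inverse t * a1" using c_upper[OF sc[OF x1]] .
    then have "t * c \<le> t * (norm (inverse t *\<^sub>R x1 + y) - inverse t * a1)"
      using 2 by (simp add: mult_left_mono)
    also have "\<dots> = norm (t *\<^sub>R (inverse t *\<^sub>R x1 + y)) - a1" using 2 by (simp add: right_diff_distrib)
    also have "t *\<^sub>R (inverse t *\<^sub>R x1 + y) = x1 + t *\<^sub>R y" using 2 by (simp add: scaleR_add_right)
    finally show ?thesis by simp
  next
    case 3
    define s where "s = - t"
    have s: "s > 0" using 3 by (simp add: s_def)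
    have "inverse s * a1 - norm (inverse s *\<^sub>R x1 - y) \<le> c" using c_lower[OF sc[OF x1]] .
    then have "s * (inverse s * a1 - norm (inverse s *\<^sub>R x1 - y)) \<le> s * c"
      using s by (simp add: mult_left_mono)
    also have "s * (inverse s * a1 - norm (inverse s *\<^sub>R x1 - y)) = a1 - norm (s *\<^sub>R (inverse s *\<^sub>R x1 - y))"
      using s by (simp add: right_diff_distrib)
    also have "s *\<^sub>R (inverse s *\<^sub>R x1 - y) = x1 + t *\<^sub>R y" using s by (simp add: s_def scaleR_diff_right)
    finally show ?thesis by (simp add: s_def)
  qed
qed

text \<open>A dominated graph whose domain misses \<open>y\<close> has a strictly larger dominated extension;
  hence a maximal one is defined everywhere.\<close>
lemma dominated_graph_extend:
  fixes x0 :: "'a::real_normed_vector"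
  assumes G: "dominated_graph x0 G" and y: "\<forall>a. (y, a) \<notin> G"
  shows "\<exists>G'. dominated_graph x0 G' \<and> G \<subseteq> G' \<and> G' \<noteq> G"
proof -
  have add: "\<And>x a z b. (x,a) \<in> G \<Longrightarrow> (z,b) \<in> G \<Longrightarrow> (x + z, a + b) \<in> G"
    and sc: "\<And>x a r. (x,a) \<in> G \<Longrightarrow> (r *\<^sub>R x, r * a) \<in> G"
    and fn: "\<And>x a b. (x,a) \<in> G \<Longrightarrow> (x,b) \<in> G \<Longrightarrow> a = b"
    and x0: "(x0, norm x0) \<in> G"
    using G unfolding dominated_graph_def by blast+
  obtain c where c_lower: "\<And>u a. (u,a) \<in> G \<Longrightarrow> a - norm (u - y) \<le> c"
    and c_upper: "\<And>v b. (v,b) \<in> G \<Longrightarrow> c \<le> norm (v + y) - b"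
    using dominated_graph_extension_value[OF G] by blast
  define G' where "G' = {(x + t *\<^sub>R y, a + t * c) | x a t. (x,a) \<in> G}"
  have GG': "G \<subseteq> G'" unfolding G'_def by force
  have "(y, c) \<in> G'" unfolding G'_def using dominated_graph_zero[OF G]
    by (intro CollectI exI[of _ 0] exI[of _ 0] exI[of _ 1]) simp
  then have "G' \<noteq> G" using y by blast
  moreover have "dominated_graph x0 G'" unfolding dominated_graph_def
  proof (intro conjI allI impI)
    show "(x0, norm x0) \<in> G'" using GG' x0 by blast
  next
    fix x a b assume "(x, a) \<in> G'" "(x, b) \<in> G'"
    then obtain x1 a1 t1 x2 a2 t2 where e: "x = x1 + t1 *\<^sub>R y" "a = a1 + t1 * c" "(x1,a1) \<in> G"
      "x = x2 + t2 *\<^sub>R y" "b = a2 + t2 * c" "(x2,a2) \<in> G" unfolding G'_def by blast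
    have "t1 = t2"
    proof (rule ccontr)
      assume ne: "t1 \<noteq> t2"
      have x2: "x2 = x1 + (t1 - t2) *\<^sub>R y" using e by (simp add: scaleR_diff_left algebra_simps)
      have "(x2 + (-1) *\<^sub>R x1, a2 + (-1) * a1) \<in> G" using add[OF e(6) sc[OF e(3)]] .
      from sc[OF this, of "inverse (t1 - t2)"] have "(y, inverse (t1 - t2) * (a2 + (-1) * a1)) \<in> G"
        using ne by (simp add: x2)
      then show False using y by blast
    qed
    then have "a1 = a2" using fn e by simp
    then show "a = b" using e \<open>t1 = t2\<close> by simp
  next
    fix x a z b assume "(x, a) \<in> G'" "(z, b) \<in> G'"
    then obtain x1 a1 t1 x2 a2 t2 where e: "x = x1 + t1 *\<^sub>R y" "a = a1 + t1 * c" "(x1,a1) \<in> G"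
      "z = x2 + t2 *\<^sub>R y" "b = a2 + t2 * c" "(x2,a2) \<in> G" unfolding G'_def by blast
    show "(x + z, a + b) \<in> G'" unfolding G'_def
      by (intro CollectI exI[of _ "x1 + x2"] exI[of _ "a1 + a2"] exI[of _ "t1 + t2"])
        (simp add: e add[OF e(3) e(6)] algebra_simps)
  next
    fix x a r assume "(x, a) \<in> G'"
    then obtain x1 a1 t1 where e: "x = x1 + t1 *\<^sub>R y" "a = a1 + t1 * c" "(x1,a1) \<in> G"
      unfolding G'_def by blast
    have "(r *\<^sub>R x, r * a) = (r *\<^sub>R x1 + (r * t1) *\<^sub>R y, r * a1 + (r * t1) * c)"
      using e by (simp add: algebra_simps)
    then show "(r *\<^sub>R x, r * a) \<in> G'" unfolding G'_def
      using sc[OF e(3)] by blast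
  next
    fix x a assume "(x, a) \<in> G'"
    then obtain x1 a1 t where "x = x1 + t *\<^sub>R y" "a = a1 + t * c" "(x1,a1) \<in> G"
      unfolding G'_def by blast
    then show "a \<le> norm x" using dominated_extension_le_norm[OF G _ c_lower c_upper] by simp
  qed
  ultimately show ?thesis using GG' by blast
qed

lemma norming_functional:
  fixes x0 :: "'a::real_normed_vector"
  obtains h :: "'a \<Rightarrow>\<^sub>L real" where "blinfun_apply h x0 = norm x0" and "norm h \<le> 1"
proof (cases "x0 = 0")
  case True then show ?thesis using that[of 0] by simp
next
  case False
  let ?A = "{G. dominated_graph x0 G}"
  have "\<forall>C\<in>chains ?A. \<exists>U\<in>?A. \<forall>X\<in>C. X \<subseteq> U"
  proof
    fix C assume C: "C \<in> chains ?A"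
    show "\<exists>U\<in>?A. \<forall>X\<in>C. X \<subseteq> U"
    proof (cases "C = {}")
      case True then show ?thesis using dominated_graph_line[OF False] by blast
    next
      case False then show ?thesis using dominated_graph_chain_Union[OF C False] by blast
    qed
  qed
  from Zorn_Lemma2[OF this] obtain M where M: "dominated_graph x0 M"
    and max: "\<And>X. dominated_graph x0 X \<Longrightarrow> M \<subseteq> X \<Longrightarrow> X = M"
    by blast
  have total: "\<exists>a. (x, a) \<in> M" for x
    using dominated_graph_extend[OF M, of x] max by blast
  have add: "\<And>x a z b. (x,a) \<in> M \<Longrightarrow> (z,b) \<in> M \<Longrightarrow> (x + z, a + b) \<in> M"
    and sc: "\<And>x a r. (x,a) \<in> M \<Longrightarrow> (r *\<^sub>R x, r * a) \<in> M"
    and fn: "\<And>x a b. (x,a) \<in> M \<Longrightarrow> (x,b) \<in> M \<Longrightarrow> a = b"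
    and dom: "\<And>x a. (x,a) \<in> M \<Longrightarrow> a \<le> norm x"
    and x0: "(x0, norm x0) \<in> M"
    using M unfolding dominated_graph_def by blast+
  define h where "h x = (THE a. (x, a) \<in> M)" for x
  have hM: "(x, h x) \<in> M" for x
    unfolding h_def using total[of x] fn by (metis theI)
  have h_eq: "(x, a) \<in> M \<Longrightarrow> h x = a" for x a using hM fn by blast
  have bound: "\<bar>h x\<bar> \<le> norm x" for x
  proof -
    have "h ((-1) *\<^sub>R x) = - h x" using h_eq[OF sc[OF hM[of x], of "-1"]] by simp
    then show ?thesis using dom[OF hM[of x]] dom[OF hM[of "(-1) *\<^sub>R x"]] by simp
  qed
  have bl: "bounded_linear h"
  proof (rule bounded_linear_intro[of _ 1])
    show "h (x + z) = h x + h z" for x z using h_eq[OF add[OF hM hM]] .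
    show "h (r *\<^sub>R x) = r *\<^sub>R h x" for r x using h_eq[OF sc[OF hM]] by simp
    show "norm (h x) \<le> norm x * 1" for x using bound[of x] by simp
  qed
  show ?thesis
  proof (rule that[of "Blinfun h"])
    show "blinfun_apply (Blinfun h) x0 = norm x0"
      using bounded_linear_Blinfun_apply[OF bl] h_eq[OF x0] by simp
    show "norm (Blinfun h) \<le> 1"
      by (rule norm_blinfun_bound) (use bounded_linear_Blinfun_apply[OF bl] bound in auto)
  qed
qed

lemma norm_le_by_functionals:
  fixes v :: "'a::real_normed_vector"
  assumes "\<And>h :: 'a \<Rightarrow>\<^sub>L real. norm h \<le> 1 \<Longrightarrow> \<bar>blinfun_apply h v\<bar> \<le> C"
  shows "norm v \<le> C"
proof -
  obtain h :: "'a \<Rightarrow>\<^sub>L real" where "blinfun_apply h v = norm v" "norm h \<le> 1"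
    using norming_functional by blast
  then show ?thesis using assms[of h] by simp
qed

subsection \<open>BK-spaces, tails and the pairing of \<open>\<ell>\<^sup>*\<close> with \<open>\<ell>\<close>\<close>

lemma BK_space_closed:
  assumes "BK_space L N"
  shows BK_zero: "(\<lambda>_. 0) \<in> L"
    and BK_add: "c \<in> L \<Longrightarrow> d \<in> L \<Longrightarrow> (\<lambda>i. c i + d i) \<in> L"
    and BK_scale: "c \<in> L \<Longrightarrow> (\<lambda>i. a * c i) \<in> L"
    and BK_nonneg: "c \<in> L \<Longrightarrow> 0 \<le> N c"
  using assms unfolding BK_space_def by blast+

lemma BK_diff: "BK_space L N \<Longrightarrow> c \<in> L \<Longrightarrow> d \<in> L \<Longrightarrow> (\<lambda>j. c j - d j) \<in> L"
  using BK_add[of L N c "\<lambda>i. -1 * d i"] BK_scale[of L N d "-1"] by simp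

lemma BK_finite_combination:
  assumes BK: "BK_space L N" and delta: "\<forall>i. \<delta> i \<in> L"
  shows "(\<lambda>j. \<Sum>i<n. a i * \<delta> i j) \<in> L"
proof (induction n)
  case 0 then show ?case using BK_zero[OF BK] by simp
next
  case (Suc n)
  have "(\<lambda>j. (\<Sum>i<n. a i * \<delta> i j) + a n * \<delta> n j) \<in> L"
    using BK_add[OF BK Suc BK_scale[OF BK, of "\<delta> n" "a n"]] delta by simp
  then show ?case by simp
qed

lemma sum_canon_vec: "(\<Sum>i<n. a i * \<delta> i j) = (if j < n then a j else 0)"
  by (induction n) (auto simp: canon_vec_def less_Suc_eq)

definition seq_tail :: "nat \<Rightarrow> (nat \<Rightarrow> real) \<Rightarrow> nat \<Rightarrow> real" where
  "seq_tail n c = (\<lambda>j. c j - (\<Sum>i<n. c i * \<delta> i j))"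

lemma seq_tail_apply: "seq_tail n c j = (if j < n then 0 else c j)"
  by (simp add: seq_tail_def sum_canon_vec)

lemma seq_tail_0 [simp]: "seq_tail 0 c = c"
  by (simp add: seq_tail_def)

lemma seq_tail_in_Schauder:
  assumes "Schauder_seq_space L N" and "c \<in> L"
  shows "seq_tail n c \<in> L"
  using assms BK_diff BK_finite_combination unfolding Schauder_seq_space_def seq_tail_def by blast

lemma seq_tail_tendsto_zero:
  assumes "Schauder_seq_space L N" and "c \<in> L"
  shows "(\<lambda>n. N (seq_tail n c)) \<longlonglongrightarrow> 0"
  using assms unfolding Schauder_seq_space_def seq_tail_def by blast

lemma functional_sums:
  assumes S: "Schauder_seq_space L N"
    and add: "\<forall>c\<in>L. \<forall>c'\<in>L. \<phi> (\<lambda>i. c i + c' i) = \<phi> c + \<phi> c'"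
    and scale: "\<forall>c\<in>L. \<forall>a. \<phi> (\<lambda>i. a * c i) = a * \<phi> c"
    and bound: "\<forall>c\<in>L. \<bar>\<phi> c\<bar> \<le> K * N c" and e: "e \<in> L"
  shows "(\<lambda>i. \<phi> (\<delta> i) * e i) sums \<phi> e"
proof -
  have BK: "BK_space L N" and delta: "\<forall>i. \<delta> i \<in> L"
    using S unfolding Schauder_seq_space_def by blast+
  define p where "p n = (\<lambda>j. \<Sum>i<n. e i * \<delta> i j)" for n
  have pL: "p n \<in> L" for n unfolding p_def by (rule BK_finite_combination[OF BK delta])
  have p_val: "\<phi> (p n) = (\<Sum>i<n. \<phi> (\<delta> i) * e i)" for n
  proof (induction n)
    case 0
    have "p 0 = (\<lambda>i. 0 * p 0 i)" by (simp add: p_def)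
    then have "\<phi> (p 0) = 0 * \<phi> (p 0)" using scale pL by metis
    then show ?case by simp
  next
    case (Suc n)
    have "p (Suc n) = (\<lambda>j. p n j + e n * \<delta> n j)" by (simp add: p_def)
    moreover have "(\<lambda>j. e n * \<delta> n j) \<in> L" using BK_scale[OF BK] delta by blast
    ultimately have "\<phi> (p (Suc n)) = \<phi> (p n) + \<phi> (\<lambda>j. e n * \<delta> n j)" using add pL by simp
    also have "\<phi> (\<lambda>j. e n * \<delta> n j) = e n * \<phi> (\<delta> n)" using scale delta by blast
    finally show ?case using Suc by simp
  qed
  have tailL: "seq_tail n e \<in> L" for n by (rule seq_tail_in_Schauder[OF S e])
  have "e = (\<lambda>j. p n j + seq_tail n e j)" for n by (simp add: seq_tail_def p_def)
  then have split: "\<phi> e = \<phi> (p n) + \<phi> (seq_tail n e)" for n using add pL tailL by metis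
  have "(\<lambda>n. K * N (seq_tail n e)) \<longlonglongrightarrow> 0"
    using tendsto_mult_right_zero[OF seq_tail_tendsto_zero[OF S e]] .
  then have "(\<lambda>n. \<phi> (seq_tail n e)) \<longlonglongrightarrow> 0"
    by (rule Lim_null_comparison[rotated]) (use bound tailL in auto)
  then have "(\<lambda>n. \<phi> e - \<phi> (seq_tail n e)) \<longlonglongrightarrow> \<phi> e"
    using tendsto_diff[OF tendsto_const, of _ 0 sequentially "\<phi> e"] by simp
  moreover have "(\<lambda>n. \<phi> e - \<phi> (seq_tail n e)) = (\<lambda>n. \<Sum>i<n. \<phi> (\<delta> i) * e i)"
    using split p_val by (simp add: fun_eq_iff diff_eq_eq)
  ultimately show ?thesis unfolding sums_def by simp
qed

lemma dual_pairing:
  assumes S: "Schauder_seq_space L N" and d: "d \<in> dual_seq L N" and e: "e \<in> L"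
  shows "summable (\<lambda>i. d i * e i)" and "\<bar>\<Sum>i. d i * e i\<bar> \<le> dual_norm L N d * N e"
proof -
  obtain \<phi> K where add: "\<forall>c\<in>L. \<forall>c'\<in>L. \<phi> (\<lambda>i. c i + c' i) = \<phi> c + \<phi> c'"
    and scale: "\<forall>c\<in>L. \<forall>a. \<phi> (\<lambda>i. a * c i) = a * \<phi> c"
    and K: "\<forall>c\<in>L. \<bar>\<phi> c\<bar> \<le> K * N c" and d_eq: "\<forall>i. \<phi> (\<delta> i) = d i"
    using d unfolding dual_seq_def by blast
  have BK: "BK_space L N" using S unfolding Schauder_seq_space_def by blast
  have d_sums: "(\<lambda>i. d i * c i) sums \<phi> c" if "c \<in> L" for c
    using functional_sums[OF S add scale K that] d_eq by simp
  then have val: "(\<Sum>i. d i * c i) = \<phi> c" if "c \<in> L" for c using that sums_unique by metis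
  show "summable (\<lambda>i. d i * e i)" using d_sums[OF e] sums_summable by blast
  have bdd: "bdd_above ((\<lambda>c. \<bar>\<Sum>i. d i * c i\<bar>) ` {c\<in>L. N c \<le> 1})"
  proof (rule bdd_aboveI2)
    fix c assume c: "c \<in> {c\<in>L. N c \<le> 1}"
    have Nc: "0 \<le> N c" using BK_nonneg[OF BK] c by blast
    have "\<bar>\<Sum>i. d i * c i\<bar> \<le> K * N c" using c val K by simp
    also have "\<dots> \<le> \<bar>K\<bar> * N c" using Nc by (simp add: mult_right_mono)
    also have "\<dots> \<le> \<bar>K\<bar>" using c Nc by (simp add: mult_left_le)
    finally show "\<bar>\<Sum>i. d i * c i\<bar> \<le> \<bar>K\<bar>" .
  qed
  show "\<bar>\<Sum>i. d i * e i\<bar> \<le> dual_norm L N d * N e"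
  proof (cases "N e = 0")
    case True
    then have "e = (\<lambda>i. 0 * e i)" using BK e unfolding BK_space_def by auto
    then have "\<phi> e = 0" using scale e by (metis mult_zero_left)
    then show ?thesis using True val[OF e] by simp
  next
    case False
    then have Ne: "N e > 0" using BK_nonneg[OF BK e] by simp
    define c where "c = (\<lambda>i. (1 / N e) * e i)"
    have cL: "c \<in> L" unfolding c_def by (rule BK_scale[OF BK e])
    have "N c = \<bar>1 / N e\<bar> * N e" using BK e unfolding BK_space_def c_def by blast
    then have Nc: "N c = 1" using Ne by simp
    have "\<phi> c = (1 / N e) * \<phi> e" using scale e unfolding c_def by blast
    then have "\<bar>\<phi> e\<bar> / N e = \<bar>\<Sum>i. d i * c i\<bar>" using val[OF cL] Ne by (simp add: abs_mult)
    also have "\<dots> \<le> dual_norm L N d" unfolding dual_norm_def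
      by (rule cSUP_upper[OF _ bdd]) (use cL Nc in simp)
    finally show ?thesis using Ne val[OF e] by (simp add: divide_le_eq)
  qed
qed

lemma pairing_tail_sums:
  assumes "(\<lambda>i. d i * e i) sums s"
  shows "(\<lambda>j. seq_tail n d j * e j) sums (s - (\<Sum>i<n. d i * e i))"
    and "(\<lambda>j. d j * seq_tail n e j) sums (s - (\<Sum>i<n. d i * e i))"
proof -
  have "(\<lambda>j. if j \<in> {..<n} then d j * e j else 0) sums (\<Sum>i<n. d i * e i)"
    by (rule sums_If_finite_set) simp
  from sums_diff[OF assms this]
  have tail: "(\<lambda>j. if j < n then 0 else d j * e j) sums (s - (\<Sum>i<n. d i * e i))"
    by (simp add: if_distrib cong: if_cong)
  have "(\<lambda>j. seq_tail n d j * e j) = (\<lambda>j. if j < n then 0 else d j * e j)"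
    and "(\<lambda>j. d j * seq_tail n e j) = (\<lambda>j. if j < n then 0 else d j * e j)"
    by (simp_all add: fun_eq_iff seq_tail_apply)
  then show "(\<lambda>j. seq_tail n d j * e j) sums (s - (\<Sum>i<n. d i * e i))"
    and "(\<lambda>j. d j * seq_tail n e j) sums (s - (\<Sum>i<n. d i * e i))"
    using tail by simp_all
qed

lemma pairing_error_dual_tail:
  assumes S: "Schauder_seq_space L N" and S': "Schauder_seq_space (dual_seq L N) (dual_norm L N)"
    and d: "d \<in> dual_seq L N" and e: "e \<in> L" and s: "(\<lambda>i. d i * e i) sums s"
  shows "\<bar>s - (\<Sum>i<n. d i * e i)\<bar> \<le> dual_norm L N (seq_tail n d) * N e"
  using dual_pairing(2)[OF S seq_tail_in_Schauder[OF S' d] e]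
  by (simp add: sums_unique[OF pairing_tail_sums(1)[OF s], symmetric])

lemma pairing_error_tail:
  assumes S: "Schauder_seq_space L N"
    and d: "d \<in> dual_seq L N" and e: "e \<in> L" and s: "(\<lambda>i. d i * e i) sums s"
  shows "\<bar>s - (\<Sum>i<n. d i * e i)\<bar> \<le> dual_norm L N d * N (seq_tail n e)"
  using dual_pairing(2)[OF S d seq_tail_in_Schauder[OF S e]]
  by (simp add: sums_unique[OF pairing_tail_sums(2)[OF s], symmetric])

subsection \<open>Error estimates for partial sums of the expansions\<close>

lemma expansion_from_error_bound:
  fixes u :: "nat \<Rightarrow> 'v::real_normed_vector"
  assumes S: "Schauder_seq_space L N" and c: "c \<in> L"
    and err: "\<And>n. norm ((\<Sum>i<n. c i *\<^sub>R u i) - v) \<le> B * N (seq_tail n c)"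
  shows "norm v \<le> B * N c" and "(\<lambda>i. c i *\<^sub>R u i) sums v"
proof -
  show "norm v \<le> B * N c" using err[of 0] by simp
  have "(\<lambda>n. (\<Sum>i<n. c i *\<^sub>R u i) - v) \<longlonglongrightarrow> 0"
    by (rule Lim_null_comparison[OF always_eventually tendsto_mult_right_zero])
      (use err seq_tail_tendsto_zero[OF S c] in auto)
  then show "(\<lambda>i. c i *\<^sub>R u i) sums v" unfolding sums_def by (rule LIM_zero_cancel)
qed

lemma functional_partial_sum_error:
  fixes f :: "nat \<Rightarrow> 'a::real_normed_vector" and g :: "nat \<Rightarrow> ('a \<Rightarrow>\<^sub>L real)"
    and h :: "'a \<Rightarrow>\<^sub>L real"
  assumes S: "Schauder_seq_space L N" and S': "Schauder_seq_space (dual_seq L N) (dual_norm L N)"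
    and coeff: "\<And>x. (\<lambda>i. blinfun_apply (g i) x) \<in> L \<and> N (\<lambda>i. blinfun_apply (g i) x) \<le> B * norm x \<and>
                     (\<lambda>i. blinfun_apply (g i) x *\<^sub>R f i) sums x"
    and d: "(\<lambda>i. blinfun_apply h (f i)) \<in> dual_seq L N" and B: "B \<ge> 0"
  shows "norm ((\<Sum>i<n. blinfun_apply h (f i) *\<^sub>R g i) - h)
           \<le> B * dual_norm L N (seq_tail n (\<lambda>i. blinfun_apply h (f i)))"
proof (rule norm_blinfun_bound)
  let ?d = "\<lambda>i. blinfun_apply h (f i)"
  let ?t = "dual_norm L N (seq_tail n ?d)"
  have t_nonneg: "0 \<le> ?t"
    using S' seq_tail_in_Schauder[OF S' d] BK_nonneg unfolding Schauder_seq_space_def by blast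
  then show "0 \<le> B * ?t" using B by simp
  fix x
  let ?e = "\<lambda>i. blinfun_apply (g i) x"
  have eL: "?e \<in> L" and Ne: "N ?e \<le> B * norm x" using coeff[of x] by blast+
  have "(\<lambda>i. blinfun_apply h (?e i *\<^sub>R f i)) sums blinfun_apply h x"
    using bounded_linear.sums[OF blinfun.bounded_linear_right] coeff[of x] by blast
  then have pairing: "(\<lambda>i. ?d i * ?e i) sums blinfun_apply h x"
    by (simp add: blinfun.scaleR_right mult.commute)
  have "\<bar>blinfun_apply h x - (\<Sum>i<n. ?d i * ?e i)\<bar> \<le> ?t * N ?e"
    by (rule pairing_error_dual_tail[OF S S' d eL pairing])
  also have "\<dots> \<le> ?t * (B * norm x)" by (rule mult_left_mono[OF Ne t_nonneg])
  finally show "norm (blinfun_apply ((\<Sum>i<n. ?d i *\<^sub>R g i) - h) x) \<le> B * ?t * norm x"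
    by (simp add: blinfun.diff_left blinfun.sum_left blinfun.scaleR_left abs_minus_commute mult_ac)
qed

text \<open>Expansion of vectors: if \<open>h = \<Sum>\<^sub>i h (f i) *\<^sub>R g i\<close> with coefficients bounded in \<open>\<ell>\<^sup>*\<close>,
  the partial sums of \<open>\<Sum>\<^sub>i g i x *\<^sub>R f i\<close> approximate \<open>x\<close> up to the tails of \<open>(g i x)\<^sub>i\<close> in \<open>\<ell>\<close>;
  the norm in \<open>X\<close> is computed through norming functionals.\<close>
lemma vector_partial_sum_error:
  fixes f :: "nat \<Rightarrow> 'a::real_normed_vector" and g :: "nat \<Rightarrow> ('a \<Rightarrow>\<^sub>L real)"
  assumes S: "Schauder_seq_space L N"
    and coeff: "\<And>h :: 'a \<Rightarrow>\<^sub>L real. (\<lambda>i. blinfun_apply h (f i)) \<in> dual_seq L N \<and>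
                 dual_norm L N (\<lambda>i. blinfun_apply h (f i)) \<le> B * norm h \<and>
                 (\<lambda>i. blinfun_apply h (f i) *\<^sub>R g i) sums h"
    and e: "(\<lambda>i. blinfun_apply (g i) x) \<in> L" and B: "B \<ge> 0"
  shows "norm ((\<Sum>i<n. blinfun_apply (g i) x *\<^sub>R f i) - x)
           \<le> B * N (seq_tail n (\<lambda>i. blinfun_apply (g i) x))"
proof (rule norm_le_by_functionals)
  let ?e = "\<lambda>i. blinfun_apply (g i) x"
  let ?t = "N (seq_tail n ?e)"
  fix h :: "'a \<Rightarrow>\<^sub>L real" assume h: "norm h \<le> 1"
  let ?d = "\<lambda>i. blinfun_apply h (f i)"
  have t_nonneg: "0 \<le> ?t"
    using S seq_tail_in_Schauder[OF S e] BK_nonneg unfolding Schauder_seq_space_def by blast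
  have d: "?d \<in> dual_seq L N" and dn: "dual_norm L N ?d \<le> B * norm h"
    using coeff[of h] by blast+
  have "(\<lambda>i. blinfun_apply (?d i *\<^sub>R g i) x) sums blinfun_apply h x"
    using bounded_linear.sums[OF blinfun.bounded_linear_left] coeff[of h] by blast
  then have pairing: "(\<lambda>i. ?d i * ?e i) sums blinfun_apply h x" by (simp add: blinfun.scaleR_left)
  have "\<bar>blinfun_apply h x - (\<Sum>i<n. ?d i * ?e i)\<bar> \<le> dual_norm L N ?d * ?t"
    by (rule pairing_error_tail[OF S d e pairing])
  also have "\<dots> \<le> (B * norm h) * ?t" by (rule mult_right_mono[OF dn t_nonneg])
  also have "\<dots> \<le> B * ?t" by (rule mult_right_mono[OF mult_left_le[OF h B] t_nonneg])
  finally show "\<bar>blinfun_apply h ((\<Sum>i<n. ?e i *\<^sub>R f i) - x)\<bar> \<le> B * ?t"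
    by (simp add: blinfun.diff_right blinfun.sum_right blinfun.scaleR_right abs_minus_commute
        mult.commute)
qed

text \<open>An \<open>(\<ell>,\<ell>\<^sup>*)\<close>-atomic decomposition of \<open>X\<close> dualises: the Bessel bound for \<open>F\<close> becomes the
  upper frame bound, and the upper bound \<open>B\<close> for \<open>G\<close> gives the lower frame bound \<open>1/B\<close>.\<close>
lemma atomic_decomp_X_imp_dual:
  fixes f :: "nat \<Rightarrow> 'a::real_normed_vector" and g :: "nat \<Rightarrow> ('a \<Rightarrow>\<^sub>L real)"
  assumes S: "Schauder_seq_space L N" and S': "Schauder_seq_space (dual_seq L N) (dual_norm L N)"
    and decomp: "atomic_decomp_X L N (dual_seq L N) (dual_norm L N) g f"
  shows "atomic_decomp_dual (dual_seq L N) (dual_norm L N) L N f g"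
proof -
  obtain A B where B: "B > 0" and coeff: "\<And>x. (\<lambda>i. blinfun_apply (g i) x) \<in> L \<and>
      N (\<lambda>i. blinfun_apply (g i) x) \<le> B * norm x \<and> (\<lambda>i. blinfun_apply (g i) x *\<^sub>R f i) sums x"
    using decomp unfolding atomic_decomp_X_def by blast
  obtain B' where B': "B' > 0" and bessel: "\<And>h :: 'a \<Rightarrow>\<^sub>L real.
      (\<lambda>i. blinfun_apply h (f i)) \<in> dual_seq L N \<and> dual_norm L N (\<lambda>i. blinfun_apply h (f i)) \<le> B' * norm h"
    using decomp unfolding atomic_decomp_X_def by blast
  have "norm h \<le> B * dual_norm L N (\<lambda>i. blinfun_apply h (f i))"
    and "(\<lambda>i. blinfun_apply h (f i) *\<^sub>R g i) sums h" for h :: "'a \<Rightarrow>\<^sub>L real"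
    using expansion_from_error_bound[OF S' _ functional_partial_sum_error[OF S S' coeff]] bessel B
    by (simp_all add: less_imp_le)
  then have "(1 / B) * norm h \<le> dual_norm L N (\<lambda>i. blinfun_apply h (f i))"
    and "(\<lambda>i. blinfun_apply h (f i) *\<^sub>R g i) sums h" for h :: "'a \<Rightarrow>\<^sub>L real"
    using B by (simp_all add: field_simps)
  moreover have "1 / B > 0" using B by simp
  ultimately show ?thesis unfolding atomic_decomp_dual_def using B B' bessel coeff by blast
qed

text \<open>Conversely an \<open>(\<ell>\<^sup>*,\<ell>)\<close>-atomic decomposition of \<open>X\<^sup>*\<close> yields one of \<open>X\<close>; here only \<open>\<ell>\<close>
  needs to be a Schauder sequence space.\<close>
lemma atomic_decomp_dual_imp_X:
  fixes f :: "nat \<Rightarrow> 'a::real_normed_vector" and g :: "nat \<Rightarrow> ('a \<Rightarrow>\<^sub>L real)"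
  assumes S: "Schauder_seq_space L N"
    and decomp: "atomic_decomp_dual (dual_seq L N) (dual_norm L N) L N f g"
  shows "atomic_decomp_X L N (dual_seq L N) (dual_norm L N) g f"
proof -
  obtain A B where B: "B > 0" and coeff: "\<And>h :: 'a \<Rightarrow>\<^sub>L real.
      (\<lambda>i. blinfun_apply h (f i)) \<in> dual_seq L N \<and> dual_norm L N (\<lambda>i. blinfun_apply h (f i)) \<le> B * norm h \<and>
      (\<lambda>i. blinfun_apply h (f i) *\<^sub>R g i) sums h"
    using decomp unfolding atomic_decomp_dual_def by blast
  obtain B' where B': "B' > 0" and bessel: "\<And>x. (\<lambda>i. blinfun_apply (g i) x) \<in> L \<and>
      N (\<lambda>i. blinfun_apply (g i) x) \<le> B' * norm x"
    using decomp unfolding atomic_decomp_dual_def by blast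
  have "norm x \<le> B * N (\<lambda>i. blinfun_apply (g i) x)"
    and "(\<lambda>i. blinfun_apply (g i) x *\<^sub>R f i) sums x" for x
    using expansion_from_error_bound[OF S _ vector_partial_sum_error[OF S coeff]] bessel B
    by (simp_all add: less_imp_le)
  then have "(1 / B) * norm x \<le> N (\<lambda>i. blinfun_apply (g i) x)"
    and "(\<lambda>i. blinfun_apply (g i) x *\<^sub>R f i) sums x" for x
    using B by (simp_all add: field_simps)
  moreover have "1 / B > 0" using B by simp
  ultimately show ?thesis unfolding atomic_decomp_X_def using B B' bessel coeff by blast
qed

theorem mainTheorem9:
  fixes L :: "(nat \<Rightarrow> real) set" and N :: "(nat \<Rightarrow> real) \<Rightarrow> real"
    and f :: "nat \<Rightarrow> 'a::banach" and g :: "nat \<Rightarrow> ('a \<Rightarrow>\<^sub>L real)"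
  assumes "reflexive_space TYPE('a)"
    and "Schauder_seq_space L N"
    and "Schauder_seq_space (dual_seq L N) (dual_norm L N)"
  shows "atomic_decomp_X L N (dual_seq L N) (dual_norm L N) g f \<longleftrightarrow>
         atomic_decomp_dual (dual_seq L N) (dual_norm L N) L N f g"
  using atomic_decomp_X_imp_dual[OF assms(2,3)] atomic_decomp_dual_imp_X[OF assms(2)] by blast

end
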